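(* Let $n\ge 3$ be an integer and $r=\lceil \binom{n}{3}/\lfloor n/3\rfloor\rceil$. If $g\ge r$ is a positive integer and there exists an orthogonal array $\mathrm{OA}(3,n+2,g)$, then there exists a $\mathrm{TOC}_q(n,4,3)$ with $q=g+1$.
   Context: $\mathcal{H}_q(n,w)$ is the set of all words of length $n$ over $\mathbb{Z}_q$ with exactly $w$ nonzero entries, with the Hamming distance. An $(n,d,w)_q$-code is a nonempty subset of $\mathcal{H}_q(n,w)$ in which any two distinct words have Hamming distance at least $d$; $A_q(n,d,w)$ is the maximum size of such a code and a code of this size is optimal. A $\mathrm{TOC}_q(n,d,w)$ is a partition of $\mathcal{H}_q(n,w)$ into mutually disjoint optimal $(n,d,w)_q$-codes. An orthogonal array $\mathrm{OA}(t,k,s)$ is an $s^t\times k$ array over an $s$-symbol alphabet such that in every choice of $t$ columns each ordered $t$-tuple of symbols appears in exactly one row. *)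

theory Defs
  imports Main "HOL-Library.Disjoint_Sets" Complex_Main
begin

text \<open>Words of length n over Z_q are modelled as functions nat => nat that take values
  in {0..<q} and vanish outside the positions {0..<n}.\<close>

definition words :: "nat \<Rightarrow> nat \<Rightarrow> (nat \<Rightarrow> nat) set" where
  "words q n = {x. (\<forall>i<n. x i < q) \<and> (\<forall>i\<ge>n. x i = 0)}"

definition wt :: "nat \<Rightarrow> (nat \<Rightarrow> nat) \<Rightarrow> nat" where
  "wt n x = card {i. i < n \<and> x i \<noteq> 0}"

definition hdist :: "nat \<Rightarrow> (nat \<Rightarrow> nat) \<Rightarrow> (nat \<Rightarrow> nat) \<Rightarrow> nat" where
  "hdist n x y = card {i. i < n \<and> x i \<noteq> y i}"

definition Hq :: "nat \<Rightarrow> nat \<Rightarrow> nat \<Rightarrow> (nat \<Rightarrow> nat) set" where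
  "Hq q n w = {x \<in> words q n. wt n x = w}"

definition is_code :: "nat \<Rightarrow> nat \<Rightarrow> nat \<Rightarrow> nat \<Rightarrow> (nat \<Rightarrow> nat) set \<Rightarrow> bool" where
  "is_code q n d w C \<longleftrightarrow> C \<noteq> {} \<and> C \<subseteq> Hq q n w \<and>
     (\<forall>x\<in>C. \<forall>y\<in>C. x \<noteq> y \<longrightarrow> d \<le> hdist n x y)"

definition Aq :: "nat \<Rightarrow> nat \<Rightarrow> nat \<Rightarrow> nat \<Rightarrow> nat" where
  "Aq q n d w = Max {card C | C. is_code q n d w C}"

definition optimal_code :: "nat \<Rightarrow> nat \<Rightarrow> nat \<Rightarrow> nat \<Rightarrow> (nat \<Rightarrow> nat) set \<Rightarrow> bool" where
  "optimal_code q n d w C \<longleftrightarrow> is_code q n d w C \<and> card C = Aq q n d w"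

definition is_TOC :: "nat \<Rightarrow> nat \<Rightarrow> nat \<Rightarrow> nat \<Rightarrow> (nat \<Rightarrow> nat) set set \<Rightarrow> bool" where
  "is_TOC q n d w P \<longleftrightarrow> \<Union>P = Hq q n w \<and> disjoint P \<and> (\<forall>C\<in>P. optimal_code q n d w C)"

definition TOC_exists :: "nat \<Rightarrow> nat \<Rightarrow> nat \<Rightarrow> nat \<Rightarrow> bool" where
  "TOC_exists q n d w \<longleftrightarrow> (\<exists>P. is_TOC q n d w P)"

definition is_OA :: "nat \<Rightarrow> nat \<Rightarrow> nat \<Rightarrow> (nat \<Rightarrow> nat \<Rightarrow> nat) \<Rightarrow> bool" where
  "is_OA t k s M \<longleftrightarrow>
     (\<forall>r < s ^ t. \<forall>c < k. M r c < s) \<and>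
     (\<forall>cols :: nat \<Rightarrow> nat. inj_on cols {..<t} \<and> (\<forall>i<t. cols i < k) \<longrightarrow>
        (\<forall>sym :: nat \<Rightarrow> nat. (\<forall>i<t. sym i < s) \<longrightarrow>
           (\<exists>!r. r < s ^ t \<and> (\<forall>i<t. M r (cols i) = sym i))))"

definition OA_exists :: "nat \<Rightarrow> nat \<Rightarrow> nat \<Rightarrow> bool" where
  "OA_exists t k s \<longleftrightarrow> (\<exists>M. is_OA t k s M)"

end

theory Submission
  imports Defs
begin

(* Row r of the orthogonal array M and a 3-subset T of the n positions give the word carrying
   M r i + \<Sum>T (mod g, plus 1 to be nonzero) at each i \<in> T. For fixed r these words have
   pairwise distinct supports; if two supports I \<union> {k} and I \<union> {k'} share a pair I, their
   shifts differ by k - k', which is nonzero mod g once g \<ge> n, so the words differ on I as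
   well. Hence each code has distance 4 and C(n,3) words, which is optimal because a weight-3
   code of distance 4 cannot repeat a support. Strength 3 of M makes (r, T) \<mapsto> word a
   bijection onto H_{g+1}(n,3), so the g^3 codes partition it. The bound on g is used only to
   get g \<ge> n for n \<ge> 4, and only n of the n + 2 columns of M are needed. *)

lemma add_mod_right_cancel_less:
  fixes a b c g :: nat
  assumes "(a + c) mod g = (b + c) mod g" "a < g" "b < g"
  shows "a = b"
proof -
  have "(int a + int c) mod int g = (int b + int c) mod int g"
    using assms(1) by (metis of_nat_add zmod_int)
  then have "(int a + int c - int c) mod int g = (int b + int c - int c) mod int g"
    by (rule mod_diff_cong) (rule refl)
  then show ?thesis using assms(2,3) by (simp add: zmod_int)
qed

lemma mod_add_complement:
  fixes a s g :: nat
  assumes "a < g"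
  shows "((a + (g - s mod g)) mod g + s) mod g = a"
proof -
  have "((a + (g - s mod g)) mod g + s) mod g = (a + (g - s mod g) + s mod g) mod g"
    by (simp add: mod_simps)
  also have "a + (g - s mod g) + s mod g = a + g"
    using mod_less_divisor[of g s] assms by linarith
  finally show ?thesis using assms by simp
qed

lemma binomial_3_eq: "6 * (n choose 3) = n * (n - 1) * (n - 2)"
proof (induction n)
  case (Suc n)
  have "2 * (n choose 2) = n * (n - 1)"
    by (metis choose_two dvd_div_mult_self dvd_refl even_mult_iff mult.commute
        odd_two_times_div_two_nat)
  moreover have "(Suc n choose 3) = (n choose 2) + (n choose 3)"
    by (simp add: numeral_3_eq_3 numeral_2_eq_2)
  ultimately have "6 * (Suc n choose 3) = 3 * (n * (n - 1)) + n * (n - 1) * (n - 2)"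
    using Suc.IH by simp
  also have "\<dots> = Suc n * (Suc n - 1) * (Suc n - 2)"
  proof (cases "n < 2")
    case False
    then obtain m where "n = m + 2" by (metis add.commute le_Suc_ex not_less)
    then show ?thesis by (simp add: algebra_simps)
  qed auto
  finally show ?case .
qed simp

lemma ceiling_binomial_bound_imp_le:
  fixes n g :: nat
  assumes "4 \<le> n"
    and "real g \<ge> real_of_int \<lceil>real (n choose 3) / real (n div 3)\<rceil>"
  shows "n \<le> g"
proof (rule ccontr)
  assume "\<not> n \<le> g"
  then have g_le: "g \<le> n - 1" by simp
  let ?d = "n div 3"
  have "real (n choose 3) / real ?d \<le> real g"
    using assms(2) le_of_int_ceiling order_trans by blast
  moreover have "0 < ?d" using assms(1) by simp
  ultimately have "real (n choose 3) \<le> real (g * ?d)"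
    by (simp add: divide_le_eq)
  then have binom_le: "n choose 3 \<le> g * ?d"
    by (simp only: of_nat_le_iff)
  have "(n - 2) * (n * (n - 1)) = 6 * (n choose 3)"
    by (simp add: binomial_3_eq)
  also have "\<dots> \<le> 6 * ((n - 1) * ?d)"
    using binom_le g_le by (meson le_trans mult_le_mono1 mult_le_mono2)
  also have "\<dots> \<le> 2 * (n * (n - 1))"
    by simp
  finally have "n = 4"
    using assms(1) by simp
  then show False
    using binom_le g_le binomial_3_eq[of 4] by simp
qed

definition support :: "nat \<Rightarrow> (nat \<Rightarrow> nat) \<Rightarrow> nat set" where
  "support n x = {i. i < n \<and> x i \<noteq> 0}"

lemma wt_eq_card_support: "wt n x = card (support n x)"
  by (simp add: wt_def support_def)

lemma card_le_hdist:
  assumes "D \<subseteq> {..<n}" "\<And>i. i \<in> D \<Longrightarrow> x i \<noteq> y i"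
  shows "card D \<le> hdist n x y"
  unfolding hdist_def by (rule card_mono) (use assms in auto)

lemma hdist_le_wt_if_same_support:
  assumes "support n x = support n y"
  shows "hdist n x y \<le> wt n x"
  unfolding hdist_def wt_eq_card_support
proof (rule card_mono)
  show "{i. i < n \<and> x i \<noteq> y i} \<subseteq> support n x"
  proof
    fix i assume "i \<in> {i. i < n \<and> x i \<noteq> y i}"
    then have "i < n" "x i \<noteq> y i" by auto
    then have "i \<in> support n x \<or> i \<in> support n y" by (auto simp: support_def)
    then show "i \<in> support n x" using assms by auto
  qed
qed (simp add: support_def)

lemma code_card_le_binomial:
  assumes "is_code q n d w C" "w < d"
  shows "card C \<le> n choose w"
proof -
  have "inj_on (support n) C"
  proof (rule inj_onI, rule ccontr)
    fix x y assume "x \<in> C" "y \<in> C" "support n x = support n y" "x \<noteq> y"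
    then have "d \<le> hdist n x y" "hdist n x y \<le> w"
      using assms(1) hdist_le_wt_if_same_support by (auto simp: is_code_def Hq_def)
    then show False using assms(2) by simp
  qed
  moreover have "support n ` C \<subseteq> {S. S \<subseteq> {..<n} \<and> card S = w}"
    using assms(1) by (auto simp: is_code_def Hq_def wt_eq_card_support support_def)
  ultimately have "card C \<le> card {S. S \<subseteq> {..<n} \<and> card S = w}"
    by (intro card_inj_on_le) auto
  then show ?thesis by (simp add: n_subsets)
qed

lemma Aq_eq_binomial:
  assumes "is_code q n d w C" "card C = n choose w" "w < d"
  shows "Aq q n d w = n choose w"
proof -
  have "{card C | C. is_code q n d w C} \<subseteq> {..n choose w}"
    using code_card_le_binomial assms(3) by auto
  moreover have "n choose w \<in> {card C | C. is_code q n d w C}"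
    using assms(1,2) by force
  ultimately show ?thesis
    unfolding Aq_def by (intro Max_eqI) (auto intro: finite_subset)
qed

lemma is_OA_symbol_less:
  assumes "is_OA t k s M" "r < s ^ t" "c < k"
  shows "M r c < s"
  using conjunct1[OF assms(1)[unfolded is_OA_def]] assms(2,3) by blast

lemma is_OA_ex1_row:
  assumes "is_OA t k s M" "T \<subseteq> {..<k}" "card T = t" "\<And>c. c \<in> T \<Longrightarrow> \<sigma> c < s"
  shows "\<exists>!r. r < s ^ t \<and> (\<forall>c\<in>T. M r c = \<sigma> c)"
proof -
  have "finite T" using assms(2) finite_subset by blast
  then obtain f where f: "bij_betw f {..<t} T"
    using ex_bij_betw_nat_finite[of T] assms(3) by (auto simp: atLeast0LessThan)
  have "inj_on f {..<t}" "\<forall>i<t. f i < k" "\<forall>i<t. \<sigma> (f i) < s"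
    using f assms(2,4) by (auto simp: bij_betw_def)
  then have "\<exists>!r. r < s ^ t \<and> (\<forall>i<t. M r (f i) = \<sigma> (f i))"
    using conjunct2[OF assms(1)[unfolded is_OA_def], rule_format, of f "\<sigma> \<circ> f"] by simp
  moreover have "T = f ` {..<t}"
    using f by (simp add: bij_betw_def)
  ultimately show ?thesis by (simp add: lessThan_def)
qed

lemma card3_intersection_cases:
  assumes "card T = 3" "card T' = 3" "T \<noteq> T'"
  obtains "4 \<le> card (T - T') + card (T' - T)"
    | k k' I where "T = insert k I" "T' = insert k' I" "k \<notin> I" "k' \<notin> I" "k \<noteq> k'"
proof -
  have fin: "finite T" "finite T'"
    using assms(1,2) by (auto intro: card_ge_0_finite)
  have "card (T \<inter> T') \<noteq> 3"
  proof
    assume "card (T \<inter> T') = 3"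
    then have "T \<inter> T' = T" "T \<inter> T' = T'"
      using fin assms(1,2) by (metis Int_lower1 card_subset_eq, metis Int_lower2 card_subset_eq)
    then show False using assms(3) by simp
  qed
  moreover have "card (T \<inter> T') \<le> 3"
    using assms(1) fin card_mono Int_lower1 by metis
  moreover have diffs: "card (T - T') = 3 - card (T \<inter> T')" "card (T' - T) = 3 - card (T \<inter> T')"
    using card_Diff_subset_Int[of T T'] card_Diff_subset_Int[of T' T] fin assms(1,2)
    by (simp_all add: Int_commute)
  ultimately consider "card (T \<inter> T') \<le> 1" | "card (T - T') = 1" "card (T' - T) = 1"
    by linarith
  then show thesis
  proof cases
    case 1
    then show thesis using that(1) diffs by linarith
  next
    case 2
    then obtain k k' where "T - T' = {k}" "T' - T = {k'}"
      by (meson card_1_singletonE)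
    then show thesis using that(2)[of k "T \<inter> T'" k'] by blast
  qed
qed

lemma bij_betw_prod_partition:
  assumes "bij_betw (\<lambda>(i, j). F i j) (I \<times> J) H"
  shows "\<Union>((\<lambda>i. F i ` J) ` I) = H" "disjoint ((\<lambda>i. F i ` J) ` I)"
proof -
  show "\<Union>((\<lambda>i. F i ` J) ` I) = H"
    using assms by (auto simp: bij_betw_def)
  have rows_disjoint: "F i ` J \<inter> F i' ` J = {}" if "i \<in> I" "i' \<in> I" "i \<noteq> i'" for i i'
    using assms that by (auto simp: bij_betw_def inj_on_def)
  show "disjoint ((\<lambda>i. F i ` J) ` I)"
  proof (rule disjointI)
    fix A B assume "A \<in> (\<lambda>i. F i ` J) ` I" "B \<in> (\<lambda>i. F i ` J) ` I" "A \<noteq> B"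
    then show "A \<inter> B = {}" using rows_disjoint by blast
  qed
qed

definition triples :: "nat \<Rightarrow> nat set set" where
  "triples n = {T. T \<subseteq> {..<n} \<and> card T = 3}"

lemma card_triples: "card (triples n) = n choose 3"
  by (simp add: triples_def n_subsets)

definition oa_word :: "(nat \<Rightarrow> nat \<Rightarrow> nat) \<Rightarrow> nat \<Rightarrow> nat \<Rightarrow> nat set \<Rightarrow> nat \<Rightarrow> nat" where
  "oa_word M g r T i = (if i \<in> T then (M r i + \<Sum>T) mod g + 1 else 0)"

lemma support_oa_word:
  assumes "T \<subseteq> {..<n}"
  shows "support n (oa_word M g r T) = T"
  using assms by (auto simp: support_def oa_word_def)

lemma oa_word_in_Hq:
  assumes "T \<in> triples n" "0 < g"
  shows "oa_word M g r T \<in> Hq (g + 1) n 3"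
proof -
  have "T \<subseteq> {..<n}" "card T = 3"
    using assms(1) by (auto simp: triples_def)
  moreover have "oa_word M g r T \<in> words (g + 1) n"
    using \<open>T \<subseteq> {..<n}\<close> assms(2) by (auto simp: words_def oa_word_def)
  ultimately show ?thesis
    by (simp add: Hq_def wt_eq_card_support support_oa_word)
qed

lemma oa_word_hdist_ge_4:
  assumes T: "T \<in> triples n" "T' \<in> triples n" "T \<noteq> T'" and g: "4 \<le> n \<Longrightarrow> n \<le> g"
  shows "4 \<le> hdist n (oa_word M g r T) (oa_word M g r T')"
proof -
  let ?x = "oa_word M g r T" and ?y = "oa_word M g r T'"
  have sub: "T \<subseteq> {..<n}" "T' \<subseteq> {..<n}" and card: "card T = 3" "card T' = 3"
    using T by (auto simp: triples_def)
  have fin: "finite T" "finite T'"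
    using sub finite_subset by blast+
  have outside: "?x i \<noteq> ?y i" if "i \<in> (T - T') \<union> (T' - T)" for i
    using that by (auto simp: oa_word_def)
  from card T(3) show ?thesis
  proof (cases rule: card3_intersection_cases)
    case 1
    have "card ((T - T') \<union> (T' - T)) = card (T - T') + card (T' - T)"
      by (rule card_Un_disjoint) (use fin in auto)
    moreover have "card ((T - T') \<union> (T' - T)) \<le> hdist n ?x ?y"
      by (rule card_le_hdist) (use sub outside in auto)
    ultimately show ?thesis
      using 1 by linarith
  next
    case (2 k k' I)
    have "finite I" "card I = 2"
      using 2 fin card by auto
    then have card_Un: "card (T \<union> T') = 4"
      using 2 by (simp add: insert_commute)
    moreover have "card (T \<union> T') \<le> n"
      using sub card_mono[of "{..<n}" "T \<union> T'"] by simp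
    ultimately have "k < g" "k' < g"
      using g 2 sub by auto
    have "?x i \<noteq> ?y i" if "i \<in> T \<union> T'" for i
    proof (cases "i \<in> I")
      case True
      have "(k + (M r i + \<Sum>I)) mod g \<noteq> (k' + (M r i + \<Sum>I)) mod g"
        using add_mod_right_cancel_less \<open>k < g\<close> \<open>k' < g\<close> 2(5) by blast
      then show ?thesis
        using True 2 \<open>finite I\<close> by (simp add: oa_word_def add_ac)
    next
      case False
      then show ?thesis using that outside 2 by blast
    qed
    then show ?thesis
      using card_le_hdist[of "T \<union> T'" n ?x ?y] sub card_Un by auto
  qed
qed

lemma is_code_oa_word_image:
  assumes "3 \<le> n" "0 < g" "4 \<le> n \<Longrightarrow> n \<le> g"
  shows "is_code (g + 1) n 4 3 (oa_word M g r ` triples n)"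
proof -
  have "{0, 1, 2} \<in> triples n"
    using assms(1) by (auto simp: triples_def)
  then show ?thesis
    using oa_word_in_Hq[OF _ assms(2)] oa_word_hdist_ge_4[OF _ _ _ assms(3)]
    unfolding is_code_def by blast
qed

lemma card_oa_word_image: "card (oa_word M g r ` triples n) = n choose 3"
proof -
  have "inj_on (oa_word M g r) (triples n)"
    by (rule inj_on_inverseI[of _ "support n"]) (simp add: support_oa_word triples_def)
  then show ?thesis
    by (simp add: card_image card_triples)
qed

lemma inj_on_oa_word:
  assumes OA: "is_OA 3 k g M" and "n \<le> k"
  shows "inj_on (\<lambda>(r, T). oa_word M g r T) ({..<g ^ 3} \<times> triples n)"
proof (rule inj_onI, clarify)
  fix r r' T T'
  assume r: "r < g ^ 3" "r' < g ^ 3" and T: "T \<in> triples n" "T' \<in> triples n"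
    and eq: "oa_word M g r T = oa_word M g r' T'"
  have sub: "T \<subseteq> {..<k}" "card T = 3"
    using T(1) assms(2) by (auto simp: triples_def)
  have "T = T'"
    using arg_cong[OF eq, of "support n"] T by (simp add: support_oa_word triples_def)
  moreover have "M r' c = M r c" if "c \<in> T" for c
  proof -
    have "(M r c + \<Sum>T) mod g = (M r' c + \<Sum>T) mod g"
      using fun_cong[OF eq, of c] \<open>T = T'\<close> that by (simp add: oa_word_def)
    moreover have "M r c < g" "M r' c < g"
      using is_OA_symbol_less[OF OA] r sub that by blast+
    ultimately show ?thesis
      using add_mod_right_cancel_less by metis
  qed
  moreover have "\<exists>!s. s < g ^ 3 \<and> (\<forall>c\<in>T. M s c = M r c)"
    using is_OA_ex1_row[OF OA sub] is_OA_symbol_less[OF OA r(1)] sub(1) by blast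
  ultimately show "r = r' \<and> T = T'"
    using r by blast
qed

lemma Hq_subset_oa_word_image:
  assumes OA: "is_OA 3 k g M" and "n \<le> k" "0 < g"
  shows "Hq (g + 1) n 3 \<subseteq> (\<lambda>(r, T). oa_word M g r T) ` ({..<g ^ 3} \<times> triples n)"
proof
  fix x assume x: "x \<in> Hq (g + 1) n 3"
  define T where "T = support n x"
  have "T \<in> triples n"
    using x by (auto simp: T_def triples_def support_def Hq_def wt_eq_card_support)
  then have sub: "T \<subseteq> {..<k}" "card T = 3"
    using assms(2) by (auto simp: triples_def)
  define \<sigma> where "\<sigma> c = (x c - 1 + (g - \<Sum>T mod g)) mod g" for c
  obtain r where r: "r < g ^ 3" "\<forall>c\<in>T. M r c = \<sigma> c"
    using is_OA_ex1_row[OF OA sub, of \<sigma>] assms(3) by (auto simp: \<sigma>_def)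
  have "x = oa_word M g r T"
  proof
    fix i
    show "x i = oa_word M g r T i"
    proof (cases "i \<in> T")
      case True
      then have "x i \<noteq> 0" "x i - 1 < g"
        using x by (auto simp: T_def support_def Hq_def words_def)
      then show ?thesis
        using True r(2) mod_add_complement[of "x i - 1" g "\<Sum>T"]
        by (simp add: oa_word_def \<sigma>_def)
    next
      case False
      then show ?thesis
        using x by (auto simp: T_def support_def Hq_def words_def oa_word_def)
    qed
  qed
  then show "x \<in> (\<lambda>(r, T). oa_word M g r T) ` ({..<g ^ 3} \<times> triples n)"
    using r(1) \<open>T \<in> triples n\<close> by blast
qed

lemma bij_betw_oa_word:
  assumes OA: "is_OA 3 k g M" and "n \<le> k" "0 < g"
  shows "bij_betw (\<lambda>(r, T). oa_word M g r T) ({..<g ^ 3} \<times> triples n) (Hq (g + 1) n 3)"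
  unfolding bij_betw_def
proof
  show "inj_on (\<lambda>(r, T). oa_word M g r T) ({..<g ^ 3} \<times> triples n)"
    using inj_on_oa_word[OF assms(1,2)] .
  show "(\<lambda>(r, T). oa_word M g r T) ` ({..<g ^ 3} \<times> triples n) = Hq (g + 1) n 3"
    using Hq_subset_oa_word_image[OF assms] oa_word_in_Hq[OF _ assms(3)] by auto
qed

theorem proposition4p7:
  fixes n g :: nat
  assumes "n \<ge> 3"
    and "0 < g"
    and "real g \<ge> real_of_int \<lceil>real (n choose 3) / real (n div 3)\<rceil>"
    and "OA_exists 3 (n + 2) g"
  shows "TOC_exists (g + 1) n 4 3"
proof -
  obtain M where OA: "is_OA 3 (n + 2) g M"
    using assms(4) by (auto simp: OA_exists_def)
  have g_large: "4 \<le> n \<Longrightarrow> n \<le> g"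
    using ceiling_binomial_bound_imp_le assms(3) by blast
  let ?C = "\<lambda>r. oa_word M g r ` triples n"
  have optimal: "optimal_code (g + 1) n 4 3 (?C r)" for r
  proof -
    have "is_code (g + 1) n 4 3 (?C r)" "card (?C r) = n choose 3"
      using is_code_oa_word_image[OF assms(1,2) g_large] card_oa_word_image by blast+
    then show ?thesis
      using Aq_eq_binomial by (simp add: optimal_code_def)
  qed
  have "bij_betw (\<lambda>(r, T). oa_word M g r T) ({..<g ^ 3} \<times> triples n) (Hq (g + 1) n 3)"
    using bij_betw_oa_word[OF OA _ assms(2)] by simp
  then have "is_TOC (g + 1) n 4 3 (?C ` {..<g ^ 3})"
    unfolding is_TOC_def using bij_betw_prod_partition[where F = "oa_word M g"] optimal
    by blast
  then show ?thesis
    unfolding TOC_exists_def by blast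
qed

end
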